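(* For a word $\tau=(a_0,\ldots,a_{L-1})$ of positive integers define its carry constant $C(\tau)=\sum_{j=0}^{L-1}3^{L-1-j}2^{a_0+\cdots+a_{j-1}}$. Let $\sigma=(k_0,\ldots,k_{\ell-1})$ be a word of positive integers, let $C_\ell=C(\sigma)$, and for $1\le s\le\ell-1$ let $\sigma^{\langle s\rangle}=(k_s,k_{s+1},\ldots,k_{\ell-1},k_0,\ldots,k_{s-1})$ be its cyclic rotation starting at index $s$, with $C^{\langle s\rangle}=C(\sigma^{\langle s\rangle})$. Let $m\ge 1$ and suppose $\delta_s:=v_2\bigl(C^{\langle s\rangle}-C_\ell\bigr)\ge m$. Let $r$ be the largest integer with $0\le r\le\ell$ such that $\sum_{j=0}^{r-1}k_j<m$. Then $k_j=k_{(j+s)\bmod\ell}$ for all $0\le j<r$.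
   Context: $v_2$ is the $2$-adic valuation, with $v_2(0)=+\infty$. Empty sums are $0$. *)

theory Defs
  imports "HOL-Computational_Algebra.Computational_Algebra" "HOL-Library.Extended_Nat"
begin

definition v2 :: "int \<Rightarrow> enat" where
  "v2 x = (if x = 0 then \<infinity> else enat (multiplicity (2::int) x))"

definition carry :: "nat list \<Rightarrow> int" where
  "carry \<tau> = (\<Sum>j<length \<tau>. 3 ^ (length \<tau> - 1 - j) * 2 ^ (\<Sum>i<j. \<tau> ! i))"

definition rot :: "nat \<Rightarrow> nat list \<Rightarrow> nat list" where
  "rot s \<sigma> = drop s \<sigma> @ take s \<sigma>"

end

theory Submission
  imports Defs
begin

text \<open>
  Write P(u, j) = u_0 + ... + u_(j-1) for the prefix sums of a word u. For words u, w of the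
  same length L, carry w - carry u is the sum over j of 3^(L-1-j) (2^P(w, j) - 2^P(u, j)).
  If u and w first differ at position t, the summands with j <= t vanish, the summand j = t+1
  has 2-adic valuation exactly a = min (P(u, t+1), P(w, t+1)), and, the letters being positive,
  every later summand is divisible by 2^(a+1); so the difference has valuation a. A word and
  its rotation have the same letter sum, hence cannot first differ at the last position, and a
  mismatch before position r would give valuation a <= P(sigma, r) < m.
\<close>

lemma v2_eqI:
  assumes "2 ^ n dvd x" "\<not> 2 ^ Suc n dvd x"
  shows "v2 x = enat n"
  using assms multiplicity_eqI[OF assms] by (auto simp: v2_def)

lemma pow2_diff_not_dvd:
  fixes c :: int and x y :: nat
  assumes "odd c" "x \<noteq> y"
  shows "\<not> 2 ^ Suc (min x y) dvd c * (2 ^ y - 2 ^ x)"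
proof
  define a where "a = min x y"
  have "2 ^ y - 2 ^ x = (2::int) ^ a * (2 ^ (y - a) - 2 ^ (x - a))"
    by (simp add: a_def right_diff_distrib power_add[symmetric])
  moreover have "odd ((2::int) ^ (y - a) - 2 ^ (x - a))"
    using assms(2) by (auto simp: a_def min_def)
  ultimately have odd_part: "c * (2 ^ y - 2 ^ x) = 2 ^ a * (c * (2 ^ (y - a) - 2 ^ (x - a)))"
    and odd: "odd (c * (2 ^ (y - a) - 2 ^ (x - a)))"
    using assms(1) by simp_all
  assume "2 ^ Suc (min x y) dvd c * (2 ^ y - 2 ^ x)"
  then have "2 ^ a * 2 dvd 2 ^ a * (c * (2 ^ (y - a) - 2 ^ (x - a)))"
    by (simp add: odd_part a_def)
  with odd show False
    by (subst (asm) dvd_mult_cancel_left) simp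
qed

lemma prefix_sum_strict_mono:
  fixes u :: "nat list"
  assumes "\<forall>x\<in>set u. x > 0" "i < j" "j \<le> length u"
  shows "(\<Sum>k<i. u ! k) < (\<Sum>k<j. u ! k)"
proof -
  have "(\<Sum>k<i. u ! k) < (\<Sum>k<Suc i. u ! k)"
    using assms by simp
  also have "\<dots> \<le> (\<Sum>k<j. u ! k)"
    using assms(2) by (intro sum_mono2) auto
  finally show ?thesis .
qed

lemma carry_diff:
  assumes "length w = length u"
  shows "carry w - carry u =
    (\<Sum>j<length u. 3 ^ (length u - 1 - j) * (2 ^ (\<Sum>i<j. w ! i) - 2 ^ (\<Sum>i<j. u ! i)))"
  using assms by (simp add: carry_def sum_subtractf right_diff_distrib)

lemma v2_carry_diff_first_mismatch:
  fixes u w :: "nat list"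
  assumes lengths: "length u = L" "length w = L"
    and pos: "\<forall>x\<in>set u. x > 0" "\<forall>x\<in>set w. x > 0"
    and t_L: "Suc t < L" and agree: "\<forall>j<t. u ! j = w ! j" and differ: "u ! t \<noteq> w ! t"
  shows "v2 (carry w - carry u) = enat (min (\<Sum>i<Suc t. u ! i) (\<Sum>i<Suc t. w ! i))"
proof -
  define P where "P v j = (\<Sum>i<j. v ! i)" for v :: "nat list" and j
  define a where "a = min (P u (Suc t)) (P w (Suc t))"
  define d where "d j = (3::int) ^ (L - 1 - j) * (2 ^ P w j - 2 ^ P u j)" for j
  have P_agree: "P u j = P w j" if "j \<le> t" for j
    using agree that unfolding P_def by (intro sum.cong) auto
  have P_differ: "P u (Suc t) \<noteq> P w (Suc t)"
    using P_agree[of t] differ by (simp add: P_def)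
  have split: "carry w - carry u = d (Suc t) + (\<Sum>j\<in>{..<L} - {Suc t}. d j)"
    using carry_diff[of w u] lengths t_L by (simp add: d_def P_def sum.remove)
  have head_dvd: "2 ^ a dvd d (Suc t)"
    unfolding d_def a_def by (intro dvd_mult dvd_diff le_imp_power_dvd) auto
  have head_not_dvd: "\<not> 2 ^ Suc a dvd d (Suc t)"
    unfolding d_def a_def by (rule pow2_diff_not_dvd[OF _ P_differ]) simp
  have tail_term_dvd: "2 ^ Suc a dvd d j" if "j \<in> {..<L} - {Suc t}" for j
  proof (cases "j \<le> t")
    case True
    then show ?thesis by (simp add: d_def P_agree)
  next
    case False
    with that have "Suc t < j" "j \<le> L" by auto
    then have "P u (Suc t) < P u j" "P w (Suc t) < P w j"
      using prefix_sum_strict_mono[of u "Suc t" j] prefix_sum_strict_mono[of w "Suc t" j]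
        lengths pos unfolding P_def by simp_all
    then have "Suc a \<le> P u j" "Suc a \<le> P w j"
      by (auto simp: a_def min_def)
    then show ?thesis
      unfolding d_def by (intro dvd_mult dvd_diff le_imp_power_dvd)
  qed
  have tail_dvd: "2 ^ Suc a dvd (\<Sum>j\<in>{..<L} - {Suc t}. d j)"
    using tail_term_dvd by (rule dvd_sum)
  have "2 ^ a dvd (\<Sum>j\<in>{..<L} - {Suc t}. d j)"
    by (rule dvd_trans[OF le_imp_power_dvd tail_dvd]) simp
  with head_dvd have "2 ^ a dvd carry w - carry u"
    unfolding split by (rule dvd_add)
  moreover have "\<not> 2 ^ Suc a dvd carry w - carry u"
    unfolding split using head_not_dvd tail_dvd by (simp add: dvd_add_left_iff)
  ultimately show ?thesis
    unfolding a_def P_def by (rule v2_eqI)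
qed

lemma last_eq_if_sum_list_eq:
  fixes u w :: "nat list"
  assumes "length u = Suc t" "length w = Suc t" "sum_list u = sum_list w" "\<forall>j<t. u ! j = w ! j"
  shows "u ! t = w ! t"
proof -
  have "(\<Sum>i<t. u ! i) = (\<Sum>i<t. w ! i)"
    using assms(4) by (intro sum.cong) auto
  with assms(1-3) show ?thesis
    by (simp add: sum_list_sum_nth atLeast0LessThan)
qed

lemma rot_eq_rotate: "s \<le> length \<sigma> \<Longrightarrow> rot s \<sigma> = rotate s \<sigma>"
  by (cases "s = length \<sigma>") (simp_all add: rot_def rotate_drop_take)

lemma sum_list_rot: "sum_list (rot s \<sigma>) = sum_list \<sigma>"
  by (metis add.commute append_take_drop_id rot_def sum_list_append)

theorem mainTheorem19:
  fixes \<sigma> :: "nat list" and s m r :: nat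
  assumes pos: "\<forall>k \<in> set \<sigma>. k > 0"
    and s_range: "1 \<le> s" "s \<le> length \<sigma> - 1"
    and m_pos: "m \<ge> 1"
    and delta: "v2 (carry (rot s \<sigma>) - carry \<sigma>) \<ge> enat m"
    and r_def: "r = (GREATEST r. r \<le> length \<sigma> \<and> (\<Sum>j<r. \<sigma> ! j) < m)"
  shows "\<forall>j<r. \<sigma> ! j = \<sigma> ! ((j + s) mod length \<sigma>)"
proof (rule ccontr)
  define \<tau> where "\<tau> = rot s \<sigma>"
  have \<tau>_rotate: "\<tau> = rotate s \<sigma>"
    using s_range by (simp add: \<tau>_def rot_eq_rotate)
  have "r \<le> length \<sigma> \<and> (\<Sum>j<r. \<sigma> ! j) < m"
    unfolding r_def by (rule GreatestI_nat[where k = 0]) (use m_pos in auto)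
  then have r_le: "r \<le> length \<sigma>" and r_sum: "(\<Sum>j<r. \<sigma> ! j) < m" by auto
  assume "\<not> ?thesis"
  then obtain j where "j < r" "\<sigma> ! j \<noteq> \<sigma> ! ((j + s) mod length \<sigma>)"
    by blast
  then have "\<exists>j<r. \<sigma> ! j \<noteq> \<tau> ! j"
    using r_le nth_rotate[of j \<sigma> s] by (auto simp: \<tau>_rotate add.commute[of s j])
  then obtain t where t: "t < r" "\<sigma> ! t \<noteq> \<tau> ! t" and agree: "\<forall>j<t. \<sigma> ! j = \<tau> ! j"
    unfolding exists_least_iff[of "\<lambda>j. j < r \<and> \<sigma> ! j \<noteq> \<tau> ! j"] by auto
  have "Suc t \<noteq> length \<sigma>"
    using last_eq_if_sum_list_eq[of \<sigma> t \<tau>] t(2) agree sum_list_rot[of s \<sigma>, folded \<tau>_def]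
    by (auto simp: \<tau>_rotate)
  then have "v2 (carry \<tau> - carry \<sigma>) = enat (min (\<Sum>i<Suc t. \<sigma> ! i) (\<Sum>i<Suc t. \<tau> ! i))"
    using pos t r_le agree by (intro v2_carry_diff_first_mismatch) (auto simp: \<tau>_rotate)
  moreover have "(\<Sum>i<Suc t. \<sigma> ! i) \<le> (\<Sum>j<r. \<sigma> ! j)"
    using t by (intro sum_mono2) auto
  ultimately show False
    using delta r_sum by (simp add: \<tau>_def)
qed

end
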